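(* Let $1\le d<n$ be integers and $A\subseteq\mathbb{F}_2^n$. For a uniformly random $d$-flat $F$ in $\mathbb{F}_2^n$, \[\Pr\big[|A\cap F|\text{ is odd}\big]\le \frac12+\frac{1}{2(2^{n-d+1}-1)}.\]
   Context: A $d$-flat in $\mathbb{F}_2^n$ is a set $x_0+U$ with $x_0\in\mathbb{F}_2^n$ and $U$ a $d$-dimensional linear subspace of $\mathbb{F}_2^n$; "uniformly random $d$-flat" means uniform over the set of all such distinct sets. *)

theory Defs
  imports "HOL-Analysis.Analysis" "HOL-Library.Z2"
begin

text \<open>F_2^n is modelled as the type bit ^ 'n with n = CARD('n); F_2 is the field bit.\<close>

definition f2_scale :: "bit \<Rightarrow> bit ^ 'n \<Rightarrow> bit ^ 'n" where
  "f2_scale c x = (\<chi> i. c * x $ i)"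

lemma f2_vector_space: "vector_space (f2_scale :: bit \<Rightarrow> bit ^ 'n \<Rightarrow> bit ^ 'n)"
proof
  fix a b :: bit and x y :: "bit ^ 'n"
  show "f2_scale a (x + y) = f2_scale a x + f2_scale a y"
    unfolding f2_scale_def vec_eq_iff by (simp only: vec_lambda_beta vector_add_component distrib_left) simp
  show "f2_scale (a + b) x = f2_scale a x + f2_scale b x"
    unfolding f2_scale_def vec_eq_iff by (simp only: vec_lambda_beta vector_add_component distrib_right) simp
  show "f2_scale a (f2_scale b x) = f2_scale (a * b) x"
    unfolding f2_scale_def vec_eq_iff by (simp add: mult.assoc)
  show "f2_scale 1 x = x"
    unfolding f2_scale_def vec_eq_iff by simp
qed

definition flats :: "nat \<Rightarrow> (bit ^ 'n) set set" where
  "flats d = {(\<lambda>u. x0 + u) ` U | x0 U.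
     module.subspace f2_scale U \<and> vector_space.dim f2_scale U = d}"

end

theory Submission
  imports Defs
begin

text \<open>
  Count each d-flat F through its frames: an ordered basis (v, v_1, ..., v_k) of its direction,
  k = d - 1, together with a point x of F; every d-flat has the same number of frames. With
  U = span(v_1, ..., v_k), F is the disjoint union of the cosets x + U and x + v + U, so its sign
  s(F) = (-1)^|A \<inter> F| factors as s(x + U) s(x + v + U). For fixed U, summing over all x and
  all v \<notin> U gives (\<Sum>x. s(x + U))^2 - |U| 2^n \<ge> -|U| 2^n, because for each x the omitted
  terms with v \<in> U contribute |U| s(x + U)^2 = |U|. Summing over U and dividing by the number
  of frames, the signs of all d-flats add up to at least -1/(2^(n-d+1) - 1) times their number;
  since that sum is #flats - 2 #{F. |A \<inter> F| odd}, this is the claim.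
\<close>

class boolean_group = ab_group_add +
  assumes add_self [simp]: "a + a = 0"
begin

lemma uminus_boolean [simp]: "- a = a"
  by (rule minus_unique) simp

lemma diff_boolean [simp]: "a - b = a + b"
  by (simp add: diff_conv_add_uminus)

lemma add_self_cancel_left [simp]: "a + (a + b) = b"
  by (simp flip: add.assoc)

lemma card_translate: "card ((+) x ` S) = card S"
  by (rule card_image) (simp add: inj_on_def)

lemma mem_translate_iff: "x \<in> (+) v ` S \<longleftrightarrow> x + v \<in> S"
proof
  assume "x \<in> (+) v ` S"
  then obtain s where "s \<in> S" "x = v + s"
    by blast
  moreover have "v + s + v = s"
    by (metis add.commute add_self_cancel_left)
  ultimately show "x + v \<in> S"
    by simp
next
  assume "x + v \<in> S"
  moreover have "x = v + (x + v)"
    by (metis add.commute add_self_cancel_left)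
  ultimately show "x \<in> (+) v ` S"
    by blast
qed

definition add_subgroup :: "'a set \<Rightarrow> bool" where
  \<comment> \<open>closure under negation is automatic, as - x = x\<close>
  "add_subgroup U \<longleftrightarrow> 0 \<in> U \<and> (\<forall>x\<in>U. \<forall>y\<in>U. x + y \<in> U)"

lemma add_subgroup_Un_coset:
  assumes "add_subgroup S"
  shows "add_subgroup (S \<union> (+) v ` S)"
proof -
  have "x + y \<in> S \<union> (+) v ` S" if x: "x \<in> S \<union> (+) v ` S" and y: "y \<in> S \<union> (+) v ` S" for x y
  proof -
    obtain a where a: "a \<in> S" "x = a \<or> x = v + a"
      using x by auto
    obtain b where b: "b \<in> S" "y = b \<or> y = v + b"
      using y by auto
    from a(2) b(2) have "x + y = a + b \<or> x + y = v + (a + b)"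
      by (auto simp: algebra_simps)
    moreover have "a + b \<in> S"
      using assms a(1) b(1) by (simp add: add_subgroup_def)
    ultimately show ?thesis
      by auto
  qed
  with assms show ?thesis
    by (simp add: add_subgroup_def)
qed

lemma coset_of_member:
  assumes "add_subgroup U" "u \<in> U"
  shows "(+) u ` U = U"
proof
  show "(+) u ` U \<subseteq> U"
    using assms by (auto simp: add_subgroup_def)
  show "U \<subseteq> (+) u ` U"
  proof
    fix w assume "w \<in> U"
    then have "u + w \<in> U"
      using assms by (simp add: add_subgroup_def)
    then show "w \<in> (+) u ` U"
      by (rule rev_image_eqI) simp
  qed
qed

lemma coset_eq:
  assumes "add_subgroup U" "y \<in> (+) x ` U"
  shows "(+) y ` U = (+) x ` U"
proof -
  obtain u where "u \<in> U" "y = x + u"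
    using assms(2) by blast
  then have "(+) y ` U = (+) x ` (+) u ` U"
    by (simp add: image_image add.assoc)
  also have "\<dots> = (+) x ` U"
    using coset_of_member[OF assms(1) \<open>u \<in> U\<close>] by simp
  finally show ?thesis .
qed

lemma coset_eq_iff:
  assumes "add_subgroup S" "add_subgroup U"
  shows "(+) x ` S = (+) y ` U \<longleftrightarrow> S = U \<and> x \<in> (+) y ` U"
proof
  assume eq: "(+) x ` S = (+) y ` U"
  have "x \<in> (+) x ` S"
    using assms(1) by (force simp: add_subgroup_def)
  then have x: "x \<in> (+) y ` U"
    by (simp add: eq)
  then have "(+) x ` S = (+) x ` U"
    using eq coset_eq[OF assms(2)] by simp
  then have "S = U"
    by (simp add: inj_image_eq_iff inj_on_def)
  with x show "S = U \<and> x \<in> (+) y ` U"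
    by blast
next
  assume "S = U \<and> x \<in> (+) y ` U"
  then show "(+) x ` S = (+) y ` U"
    using coset_eq[OF assms(2)] by blast
qed

lemma cosets_disjoint:
  assumes "add_subgroup U" "v \<notin> U"
  shows "(+) x ` U \<inter> (+) (x + v) ` U = {}"
proof (rule ccontr)
  assume "(+) x ` U \<inter> (+) (x + v) ` U \<noteq> {}"
  then obtain a c where "a \<in> U" "c \<in> U" "x + a = x + v + c"
    by blast
  then have "a = v + c"
    by (simp add: add.assoc)
  then have "v = a + c"
    by (simp add: add.assoc)
  with \<open>a \<in> U\<close> \<open>c \<in> U\<close> have "v \<in> U"
    using assms(1) by (simp add: add_subgroup_def)
  with assms(2) show False ..
qed

fun span_list :: "'a list \<Rightarrow> 'a set" where
  "span_list [] = {0}"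
| "span_list (v # vs) = span_list vs \<union> (+) v ` span_list vs"

fun independent_list :: "'a list \<Rightarrow> bool" where
  "independent_list [] \<longleftrightarrow> True"
| "independent_list (v # vs) \<longleftrightarrow> independent_list vs \<and> v \<notin> span_list vs"

lemma finite_span_list [simp]: "finite (span_list vs)"
  by (induction vs) simp_all

lemma add_subgroup_span_list: "add_subgroup (span_list vs)"
proof (induction vs)
  case Nil
  then show ?case
    by (simp add: add_subgroup_def)
qed (simp add: add_subgroup_Un_coset)

lemma set_subset_span_list: "set vs \<subseteq> span_list vs"
proof (induction vs)
  case (Cons v vs)
  have "0 \<in> span_list vs"
    using add_subgroup_span_list by (simp add: add_subgroup_def)
  then have "v \<in> (+) v ` span_list vs"
    by (rule rev_image_eqI) simp
  with Cons show ?case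
    by auto
qed simp

lemma span_list_subset: "add_subgroup W \<Longrightarrow> set vs \<subseteq> W \<Longrightarrow> span_list vs \<subseteq> W"
  by (induction vs) (auto simp: add_subgroup_def)

lemma card_span_list: "independent_list vs \<Longrightarrow> card (span_list vs) = 2 ^ length vs"
proof (induction vs)
  case (Cons v vs)
  have "span_list vs \<inter> (+) v ` span_list vs = {}"
    using cosets_disjoint[OF add_subgroup_span_list, of v vs 0] Cons.prems by simp
  then have "card (span_list (v # vs)) = card (span_list vs) + card ((+) v ` span_list vs)"
    by (simp add: card_Un_disjoint)
  with Cons show ?case
    by (simp add: card_translate)
qed simp

lemma span_list_eq_iff:
  assumes "add_subgroup U" "card U = 2 ^ length vs" "independent_list vs"
  shows "span_list vs = U \<longleftrightarrow> set vs \<subseteq> U"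
proof
  assume "set vs \<subseteq> U"
  then have "span_list vs \<subseteq> U"
    using span_list_subset[OF assms(1)] by blast
  moreover have "card (span_list vs) = card U"
    using assms(2,3) card_span_list by simp
  moreover have "finite U"
    using assms(2) card_ge_0_finite by force
  ultimately show "span_list vs = U"
    by (simp add: card_subset_eq)
qed (use set_subset_span_list in blast)

definition independent_lists :: "'a set \<Rightarrow> nat \<Rightarrow> 'a list set" where
  "independent_lists W k = {vs. length vs = k \<and> independent_list vs \<and> set vs \<subseteq> W}"

lemma finite_independent_lists [simp]: "finite W \<Longrightarrow> finite (independent_lists W k)"
  by (rule finite_subset[OF _ finite_lists_length_eq[of W k]]) (auto simp: independent_lists_def)

lemma independent_lists_Suc:
  "independent_lists W (Suc k)
     = (\<lambda>(vs, v). v # vs) ` (SIGMA vs:independent_lists W k. W - span_list vs)"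
proof
  show "independent_lists W (Suc k)
          \<subseteq> (\<lambda>(vs, v). v # vs) ` (SIGMA vs:independent_lists W k. W - span_list vs)"
  proof
    fix ws assume "ws \<in> independent_lists W (Suc k)"
    then obtain v vs where "ws = v # vs" "vs \<in> independent_lists W k" "v \<in> W - span_list vs"
      by (cases ws) (auto simp: independent_lists_def)
    then show "ws \<in> (\<lambda>(vs, v). v # vs) ` (SIGMA vs:independent_lists W k. W - span_list vs)"
      by force
  qed
qed (auto simp: independent_lists_def)

lemma inj_on_Cons_pair: "inj_on (\<lambda>(vs, v). v # vs) S"
  by (auto simp: inj_on_def)

lemma card_independent_lists:
  assumes "add_subgroup W" "card W = 2 ^ w" "k \<le> w"
  shows "card (independent_lists W k) = (\<Prod>i<k. 2 ^ w - 2 ^ i)"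
  using assms(3)
proof (induction k)
  case 0
  have "independent_lists W 0 = {[]}"
    by (auto simp: independent_lists_def)
  then show ?case
    by simp
next
  case (Suc k)
  have "finite W"
    using assms(2) card_ge_0_finite by force
  have W_minus_span: "card (W - span_list vs) = 2 ^ w - 2 ^ k" if "vs \<in> independent_lists W k" for vs
  proof -
    have "span_list vs \<subseteq> W" "card (span_list vs) = 2 ^ k"
      using that span_list_subset[OF assms(1)] card_span_list by (auto simp: independent_lists_def)
    then show ?thesis
      using assms(2) by (simp add: card_Diff_subset)
  qed
  have "card (independent_lists W (Suc k)) = (\<Sum>vs\<in>independent_lists W k. card (W - span_list vs))"
    unfolding independent_lists_Suc card_image[OF inj_on_Cons_pair] using \<open>finite W\<close> by simp
  also have "\<dots> = card (independent_lists W k) * (2 ^ w - 2 ^ k)"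
    by (simp add: W_minus_span)
  finally show ?case
    using Suc by simp
qed

definition subgroup_cosets :: "nat \<Rightarrow> 'a set set" where
  "subgroup_cosets d = {(+) x ` U | x U. add_subgroup U \<and> card U = 2 ^ d}"

lemma frames_of_coset:
  assumes "add_subgroup U" "card U = 2 ^ d"
  shows "{(vs, x). vs \<in> independent_lists UNIV d \<and> (+) x ` span_list vs = (+) y ` U}
           = independent_lists U d \<times> (+) y ` U"
proof -
  have "(+) x ` span_list vs = (+) y ` U \<longleftrightarrow> set vs \<subseteq> U \<and> x \<in> (+) y ` U"
    if "vs \<in> independent_lists UNIV d" for vs x
    using that assms coset_eq_iff[OF add_subgroup_span_list assms(1)] span_list_eq_iff[OF assms(1)]
    by (simp add: independent_lists_def)
  then have "{(vs, x). vs \<in> independent_lists UNIV d \<and> (+) x ` span_list vs = (+) y ` U}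
               = {(vs, x). vs \<in> independent_lists UNIV d \<and> set vs \<subseteq> U \<and> x \<in> (+) y ` U}"
    by blast
  also have "\<dots> = independent_lists U d \<times> (+) y ` U"
    unfolding independent_lists_def by blast
  finally show ?thesis .
qed

end

lemma sum_independent_lists_Suc:
  fixes W :: "'a::boolean_group set" and h :: "'a list \<Rightarrow> 'b::comm_monoid_add"
  assumes "finite W"
  shows "(\<Sum>ws\<in>independent_lists W (Suc k). h ws)
           = (\<Sum>vs\<in>independent_lists W k. \<Sum>v\<in>W - span_list vs. h (v # vs))"
proof -
  have "(\<Sum>ws\<in>independent_lists W (Suc k). h ws)
          = (\<Sum>p\<in>(SIGMA vs:independent_lists W k. W - span_list vs). h ((\<lambda>(vs, v). v # vs) p))"
    unfolding independent_lists_Suc by (rule sum.reindex_cong[OF inj_on_Cons_pair]) simp_all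
  then show ?thesis
    using assms by (simp add: sum.Sigma split_def)
qed

lemma sum_frames_eq_sum_subgroup_cosets:
  fixes g :: "'a::{boolean_group, finite} set \<Rightarrow> 'b::comm_semiring_1"
  shows "(\<Sum>vs\<in>independent_lists UNIV d. \<Sum>x\<in>UNIV. g ((+) x ` span_list vs))
           = of_nat (2 ^ d * (\<Prod>i<d. 2 ^ d - 2 ^ i)) * (\<Sum>F\<in>subgroup_cosets d. g F)"
proof -
  let ?frames = "independent_lists UNIV d \<times> (UNIV :: 'a set)"
  let ?coset = "\<lambda>(vs, x). (+) x ` span_list vs"
  have "?coset ` ?frames \<subseteq> subgroup_cosets d"
    using add_subgroup_span_list card_span_list
    by (fastforce simp: subgroup_cosets_def independent_lists_def)
  then have "(\<Sum>p\<in>?frames. g (?coset p))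
               = (\<Sum>F\<in>subgroup_cosets d. \<Sum>p\<in>{p \<in> ?frames. ?coset p = F}. g (?coset p))"
    by (intro sum.group[symmetric]) simp_all
  also have "\<dots> = (\<Sum>F\<in>subgroup_cosets d. of_nat (2 ^ d * (\<Prod>i<d. 2 ^ d - 2 ^ i)) * g F)"
  proof (rule sum.cong)
    fix F assume "F \<in> (subgroup_cosets d :: 'a set set)"
    then obtain y U where F: "F = (+) y ` U" "add_subgroup U" "card U = 2 ^ d"
      by (auto simp: subgroup_cosets_def)
    have "{p \<in> ?frames. ?coset p = F}
            = {(vs, x). vs \<in> independent_lists UNIV d \<and> (+) x ` span_list vs = F}"
      by auto
    also have "\<dots> = independent_lists U d \<times> F"
      unfolding F(1) by (rule frames_of_coset[OF F(2,3)])
    finally have fibre: "{p \<in> ?frames. ?coset p = F} = independent_lists U d \<times> F" .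
    have "(\<Sum>p\<in>{p \<in> ?frames. ?coset p = F}. g (?coset p)) = (\<Sum>p\<in>{p \<in> ?frames. ?coset p = F}. g F)"
      by (rule sum.cong) simp_all
    also have "\<dots> = of_nat (card (independent_lists U d) * card F) * g F"
      by (simp add: fibre card_cartesian_product)
    also have "card (independent_lists U d) * card F = 2 ^ d * (\<Prod>i<d. 2 ^ d - 2 ^ i)"
      using card_independent_lists[OF F(2,3)] F(1,3) by (simp add: card_translate)
    finally show "(\<Sum>p\<in>{p \<in> ?frames. ?coset p = F}. g (?coset p))
                    = of_nat (2 ^ d * (\<Prod>i<d. 2 ^ d - 2 ^ i)) * g F" .
  qed simp
  finally show ?thesis
    by (simp add: sum.cartesian_product sum_distrib_left split_def)
qed

definition parity_sign :: "'a set \<Rightarrow> 'a set \<Rightarrow> real" where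
  "parity_sign A S = (-1) ^ card (A \<inter> S)"

lemma parity_sign_mult_self [simp]: "parity_sign A S * parity_sign A S = 1"
  by (simp add: parity_sign_def flip: power_add)

lemma parity_sign_Un_disjoint:
  assumes "finite S" "finite T" "S \<inter> T = {}"
  shows "parity_sign A (S \<union> T) = parity_sign A S * parity_sign A T"
proof -
  have "card (A \<inter> (S \<union> T)) = card (A \<inter> S) + card (A \<inter> T)"
    using assms by (simp add: Int_Un_distrib card_Un_disjoint disjoint_iff)
  then show ?thesis
    by (simp add: parity_sign_def power_add)
qed

lemma sum_parity_sign:
  assumes "finite \<F>"
  shows "(\<Sum>F\<in>\<F>. parity_sign A F) = real (card \<F>) - 2 * real (card {F \<in> \<F>. odd (card (A \<inter> F))})"
proof -
  have "parity_sign A F = 1 - 2 * (if odd (card (A \<inter> F)) then 1 else 0)" for F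
    by (simp add: parity_sign_def)
  then show ?thesis
    using assms by (simp add: sum_subtractf sum.inter_filter[symmetric] flip: sum_distrib_left)
qed

lemma sum_parity_sign_coset_pairs:
  fixes U A :: "'a::{boolean_group, finite} set"
  assumes "add_subgroup U"
  defines "s \<equiv> \<lambda>x. parity_sign A ((+) x ` U)"
  shows "(\<Sum>v\<in>-U. \<Sum>x\<in>UNIV. s x * s (x + v)) = (\<Sum>x\<in>UNIV. s x)\<^sup>2 - card U * CARD('a)"
proof -
  have shift: "(\<Sum>v\<in>UNIV. s (x + v)) = (\<Sum>x\<in>UNIV. s x)" for x
    by (rule sum.reindex_bij_witness[of _ "(+) x" "(+) x"]) simp_all
  have on_U: "s (x + u) = s x" if "u \<in> U" for x u
    using coset_eq[OF assms(1), of "x + u" x] that by (auto simp: s_def)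
  have outside_U: "(\<Sum>v\<in>-U. s (x + v)) = (\<Sum>x\<in>UNIV. s x) - card U * s x" for x
  proof -
    have "(\<Sum>v\<in>-U. s (x + v)) = (\<Sum>v\<in>UNIV. s (x + v)) - (\<Sum>v\<in>U. s (x + v))"
      by (simp add: Compl_eq_Diff_UNIV sum_diff)
    also have "(\<Sum>v\<in>U. s (x + v)) = card U * s x"
      using on_U by simp
    finally show ?thesis
      using shift by simp
  qed
  have "(\<Sum>v\<in>-U. \<Sum>x\<in>UNIV. s x * s (x + v)) = (\<Sum>x\<in>UNIV. s x * (\<Sum>v\<in>-U. s (x + v)))"
    by (simp add: sum.swap[of _ "-U"] sum_distrib_left)
  also have "\<dots> = (\<Sum>x\<in>UNIV. s x * (\<Sum>y\<in>UNIV. s y) - card U * (s x * s x))"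
    by (simp add: outside_U algebra_simps)
  also have "\<dots> = (\<Sum>x\<in>UNIV. s x)\<^sup>2 - card U * CARD('a)"
    by (simp add: sum_subtractf power2_eq_square s_def flip: sum_distrib_right)
  finally show ?thesis .
qed

lemma sum_parity_sign_frames_ge:
  fixes A :: "'a::{boolean_group, finite} set"
  shows "- (2 ^ k * real CARD('a) * real (card (independent_lists (UNIV :: 'a set) k)))
           \<le> (\<Sum>vs\<in>independent_lists UNIV (Suc k). \<Sum>x\<in>UNIV. parity_sign A ((+) x ` span_list vs))"
proof -
  have extension_ge: "- (2 ^ k * real CARD('a))
      \<le> (\<Sum>v\<in>-span_list vs. \<Sum>x\<in>UNIV. parity_sign A ((+) x ` span_list (v # vs)))"
    if "vs \<in> independent_lists UNIV k" for vs
  proof -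
    let ?U = "span_list vs"
    let ?s = "\<lambda>x. parity_sign A ((+) x ` ?U)"
    have split: "parity_sign A ((+) x ` span_list (v # vs)) = ?s x * ?s (x + v)" if "v \<notin> ?U" for x v
    proof -
      have "(+) x ` span_list (v # vs) = (+) x ` ?U \<union> (+) (x + v) ` ?U"
        by (simp add: image_Un image_image add.assoc)
      then show ?thesis
        using cosets_disjoint[OF add_subgroup_span_list that] by (simp add: parity_sign_Un_disjoint)
    qed
    have "card ?U = 2 ^ k"
      using that by (simp add: independent_lists_def card_span_list)
    then have "- (2 ^ k * real CARD('a)) \<le> (\<Sum>x\<in>UNIV. ?s x)\<^sup>2 - card ?U * CARD('a)"
      by simp
    also have "\<dots> = (\<Sum>v\<in>-?U. \<Sum>x\<in>UNIV. ?s x * ?s (x + v))"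
      using sum_parity_sign_coset_pairs[OF add_subgroup_span_list[of vs]] by simp
    also have "\<dots> = (\<Sum>v\<in>-?U. \<Sum>x\<in>UNIV. parity_sign A ((+) x ` span_list (v # vs)))"
      using split by simp
    finally show ?thesis .
  qed
  have "- (2 ^ k * real CARD('a) * real (card (independent_lists (UNIV :: 'a set) k)))
          = (\<Sum>vs\<in>independent_lists (UNIV :: 'a set) k. - (2 ^ k * real CARD('a)))"
    by simp
  also have "\<dots> \<le> (\<Sum>vs\<in>independent_lists UNIV k.
                    \<Sum>v\<in>-span_list vs. \<Sum>x\<in>UNIV. parity_sign A ((+) x ` span_list (v # vs)))"
    by (rule sum_mono) (rule extension_ge)
  also have "\<dots> = (\<Sum>vs\<in>independent_lists UNIV (Suc k). \<Sum>x\<in>UNIV. parity_sign A ((+) x ` span_list vs))"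
    using sum_independent_lists_Suc[of "UNIV :: 'a set" "\<lambda>vs. \<Sum>x\<in>UNIV. parity_sign A ((+) x ` span_list vs)" k]
    by (simp add: Compl_eq_Diff_UNIV)
  finally show ?thesis .
qed

lemma card_frames:
  "card (independent_lists (UNIV :: 'a::{boolean_group, finite} set) d) * CARD('a)
     = 2 ^ d * (\<Prod>i<d. 2 ^ d - 2 ^ i) * card (subgroup_cosets d :: 'a set set)"
  using sum_frames_eq_sum_subgroup_cosets[of "\<lambda>_ :: 'a set. 1 :: nat" d] by simp

lemma card_subgroup_cosets_Suc:
  assumes "CARD('a::{boolean_group, finite}) = 2 ^ n" "k < n"
  shows "real (2 ^ Suc k * (\<Prod>i<Suc k. 2 ^ Suc k - 2 ^ i)) * card (subgroup_cosets (Suc k) :: 'a set set)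
           = real (card (independent_lists (UNIV :: 'a set) k)) * (2 ^ n - 2 ^ k) * 2 ^ n"
proof -
  have "add_subgroup (UNIV :: 'a set)"
    by (simp add: add_subgroup_def)
  then have "card (independent_lists (UNIV :: 'a set) (Suc k))
               = card (independent_lists (UNIV :: 'a set) k) * (2 ^ n - 2 ^ k)"
    using card_independent_lists[OF _ assms(1)] assms(2) by simp
  then have "real (2 ^ Suc k * (\<Prod>i<Suc k. 2 ^ Suc k - 2 ^ i) * card (subgroup_cosets (Suc k) :: 'a set set))
               = real (card (independent_lists (UNIV :: 'a set) k) * (2 ^ n - 2 ^ k) * 2 ^ n)"
    using card_frames[where 'a = 'a, of "Suc k"] assms(1) by simp
  moreover have "(2::nat) ^ k \<le> 2 ^ n"
    using assms(2) by simp
  ultimately show ?thesis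
    by (simp only: of_nat_mult of_nat_diff of_nat_power of_nat_numeral)
qed

lemma sum_parity_sign_subgroup_cosets_ge:
  fixes A :: "'a::{boolean_group, finite} set"
  assumes "CARD('a) = 2 ^ n" "1 \<le> d" "d \<le> n"
  shows "- real (card (subgroup_cosets d :: 'a set set)) / (2 ^ (n - d + 1) - 1)
           \<le> (\<Sum>F\<in>subgroup_cosets d. parity_sign A F)"
proof -
  obtain k where d: "d = Suc k" and "k < n"
    using assms(2,3) by (cases d) auto
  define c :: real where "c = real (2 ^ d * (\<Prod>i<d. 2 ^ d - 2 ^ i))"
  define L :: real where "L = card (independent_lists (UNIV :: 'a set) k)"
  let ?Q = "real (card (subgroup_cosets d :: 'a set set))"
  have "c > 0"
    unfolding c_def of_nat_0_less_iff
    by (intro mult_pos_pos prod_pos) (auto simp: power_strict_increasing_iff)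
  have count: "c * ?Q = L * (2 ^ n - 2 ^ k) * 2 ^ n"
    using card_subgroup_cosets_Suc[OF assms(1) \<open>k < n\<close>] by (simp add: c_def L_def d)
  have signs: "- (2 ^ k * 2 ^ n * L) \<le> c * (\<Sum>F\<in>subgroup_cosets d. parity_sign A F)"
    using sum_parity_sign_frames_ge[of k A] sum_frames_eq_sum_subgroup_cosets[of "parity_sign A" d]
      assms(1) d by (simp add: c_def L_def)
  have "n = (n - d + 1) + k"
    using \<open>k < n\<close> d by simp
  then have "(2::real) ^ n = 2 ^ (n - d + 1) * 2 ^ k"
    by (metis power_add)
  then have "(2::real) ^ (n - d + 1) - 1 = (2 ^ n - 2 ^ k) / 2 ^ k"
    by (simp add: field_simps)
  then have "c * (- ?Q / (2 ^ (n - d + 1) - 1)) = - (c * ?Q) * 2 ^ k / (2 ^ n - 2 ^ k)"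
    by simp
  also have "\<dots> = - (2 ^ k * 2 ^ n * L)"
    using \<open>k < n\<close> by (simp add: count)
  also have "\<dots> \<le> c * (\<Sum>F\<in>subgroup_cosets d. parity_sign A F)"
    by (rule signs)
  finally show ?thesis
    by (simp only: mult_le_cancel_left_pos[OF \<open>c > 0\<close>])
qed

lemma UNIV_bit: "(UNIV :: bit set) = {0, 1}"
  by (auto intro: bit.exhaust)

instance bit :: finite
  by standard (simp add: UNIV_bit)

lemma CARD_bit: "CARD(bit) = 2"
  by (simp add: UNIV_bit)

instance bit :: boolean_group
proof
  fix a :: bit
  show "a + a = 0"
    by (cases a) simp_all
qed

instance vec :: (boolean_group, finite) boolean_group
  by standard (simp add: vec_eq_iff)

lemma ex_bit_iff: "(\<exists>c :: bit. P c) \<longleftrightarrow> P 0 \<or> P 1"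
  by (metis bit.exhaust)

interpretation f2: vector_space "f2_scale :: bit \<Rightarrow> bit ^ 'n \<Rightarrow> bit ^ 'n"
  by (rule f2_vector_space)

lemma subspace_f2_iff: "f2.subspace U \<longleftrightarrow> add_subgroup (U :: (bit ^ 'n) set)"
proof -
  have "f2_scale c x \<in> U" if "0 \<in> U" "x \<in> U" for c x
    using that by (cases c) simp_all
  then show ?thesis
    unfolding f2.subspace_def add_subgroup_def by auto
qed

lemma span_f2_eq_span_list: "f2.span (set vs) = span_list (vs :: (bit ^ 'n) list)"
proof (induction vs)
  case (Cons v vs)
  have "f2.span (set (v # vs)) = {x. x \<in> span_list vs \<or> x + v \<in> span_list vs}"
    using Cons by (simp add: f2.span_insert ex_bit_iff)
  also have "\<dots> = span_list (v # vs)"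
    by (simp add: set_eq_iff mem_translate_iff)
  finally show ?case .
qed simp

lemma independent_list_if_independent_f2:
  "distinct vs \<Longrightarrow> f2.independent (set vs) \<Longrightarrow> independent_list (vs :: (bit ^ 'n) list)"
proof (induction vs)
  case (Cons v vs)
  then show ?case
    using f2.independent_insert[of v "set vs"] span_f2_eq_span_list[of vs] by auto
qed simp

lemma card_subspace_f2:
  assumes "f2.subspace (U :: (bit ^ 'n) set)"
  shows "card U = 2 ^ f2.dim U"
proof -
  obtain B where B: "B \<subseteq> U" "f2.independent B" "U \<subseteq> f2.span B" "card B = f2.dim U"
    by (rule f2.basis_exists)
  obtain vs where vs: "set vs = B" "distinct vs"
    using finite_distinct_list[of B] by auto
  have "U = span_list vs"
    using f2.span_subspace[OF B(1,3) assms] span_f2_eq_span_list[of vs] vs(1) by simp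
  moreover have "independent_list vs"
    using independent_list_if_independent_f2[OF vs(2)] B(2) by (simp add: vs(1))
  ultimately show ?thesis
    using card_span_list distinct_card[OF vs(2)] vs(1) B(4) by simp
qed

lemma flats_eq_subgroup_cosets: "flats d = (subgroup_cosets d :: (bit ^ 'n) set set)"
proof -
  have "f2.subspace U \<and> f2.dim U = d \<longleftrightarrow> add_subgroup U \<and> card U = 2 ^ d"
    for U :: "(bit ^ 'n) set"
    using card_subspace_f2[of U] subspace_f2_iff[of U] by auto
  then show ?thesis
    unfolding flats_def subgroup_cosets_def by simp
qed

theorem lemma4p1:
  fixes A :: "(bit ^ 'n) set" and d :: nat
  assumes "1 \<le> d" and "d < CARD('n)"
  shows "real (card {F \<in> (flats d :: (bit ^ 'n) set set). odd (card (A \<inter> F))})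
           / real (card (flats d :: (bit ^ 'n) set set))
         \<le> 1/2 + 1 / (2 * (2 ^ (CARD('n) - d + 1) - 1))"
proof -
  let ?Q = "real (card (flats d :: (bit ^ 'n) set set))"
  let ?P = "real (card {F \<in> (flats d :: (bit ^ 'n) set set). odd (card (A \<inter> F))})"
  define E :: real where "E = 2 ^ (CARD('n) - d + 1) - 1"
  have "E \<ge> 1"
    unfolding E_def by simp
  have "- ?Q / E \<le> (\<Sum>F\<in>flats d. parity_sign A F)"
    unfolding E_def flats_eq_subgroup_cosets
    using sum_parity_sign_subgroup_cosets_ge[of "CARD('n)" d A] CARD_bit assms by simp
  also have "\<dots> = ?Q - 2 * ?P"
    by (rule sum_parity_sign) simp
  finally have "?P \<le> (1/2 + 1 / (2 * E)) * ?Q"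
    using \<open>E \<ge> 1\<close> by (simp add: field_simps)
  moreover have "0 < 1/2 + 1 / (2 * E)"
    using \<open>E \<ge> 1\<close> by (simp add: add_pos_nonneg)
  ultimately have "?P / ?Q \<le> 1/2 + 1 / (2 * E)"
    by (cases "?Q = 0") (simp_all add: divide_le_eq)
  then show ?thesis
    unfolding E_def .
qed

end
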